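(* Let $s\in(\frac12,1)$, let $\Omega\subset\mathbb R^N$ be a bounded open set, and let $u:\mathbb R^N\to\mathbb R$ be a solution of $\Delta^s_\infty u=0$ in $\Omega$ (in the viscosity sense) with $u=f$ on $\mathbb R^N\setminus\Omega$, where $f\in C^{0,2s-1}(\mathbb R^N\setminus\Omega)$. Then $u\in C^{0,2s-1}(\mathbb R^N)$ and $[u]_{C^{0,2s-1}(\mathbb R^N)}\le[f]_{C^{0,2s-1}(\mathbb R^N\setminus\Omega)}$.
   Context: $S^{N-1}$ unit sphere. $\phi\in C^{1,1}(x_0)$ means there are $p\in\mathbb R^N$, $M,\eta_0>0$ with $|\phi(x_0+x)-\phi(x_0)-p\cdot x|\le M|x|^2$ for $|x|<\eta_0$; $\nabla\phi(x_0):=p$. Infinity fractional Laplacian: if $\nabla\phi(x)\ne0$, $v=\nabla\phi(x)/|\nabla\phi(x)|$, $\Delta^s_\infty\phi(x)=\int_0^\infty\frac{\phi(x+\eta v)+\phi(x-\eta v)-2\phi(x)}{\eta^{1+2s}}d\eta$; if $\nabla\phi(x)=0$, $\Delta^s_\infty\phi(x)=\sup_{y\in S^{N-1}}\int_0^\infty\frac{\phi(x+\eta y)-\phi(x)}{\eta^{1+2s}}d\eta+\inf_{z\in S^{N-1}}\int_0^\infty\frac{\phi(x-\eta z)-\phi(x)}{\eta^{1+2s}}d\eta$. An upper [lower] semicontinuous $u$ is a subsolution [supersolution] at $x_0$ if whenever $r>0$, $\phi\in C^{1,1}(x_0)\cap C(\overline{B_r(x_0)})$, $\phi(x_0)=u(x_0)$,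 $\phi>u$ [$\phi<u$] on $B_r(x_0)\setminus\{x_0\}$, the function $\tilde u$ equal to $\phi$ on $B_r(x_0)$ and to $u$ elsewhere satisfies $\Delta^s_\infty\tilde u(x_0)\ge0$ [$\le0$]; a solution in $\Omega$ is both at every point of $\Omega$. $[f]_{C^{0,\gamma}(A)}=\sup_{x,y\in A}|f(x)-f(y)|/|x-y|^\gamma$, $f\in C^{0,\gamma}(A)$ if finite. *)

theory Defs
  imports "HOL-Analysis.Analysis"
begin

definition c11_grad :: "('a::euclidean_space \<Rightarrow> real) \<Rightarrow> 'a \<Rightarrow> 'a \<Rightarrow> bool" where
  "c11_grad \<phi> x0 p \<longleftrightarrow> (\<exists>M \<eta>0. M > 0 \<and> \<eta>0 > 0 \<and>
     (\<forall>x. norm x < \<eta>0 \<longrightarrow> \<bar>\<phi> (x0 + x) - \<phi> x0 - p \<bullet> x\<bar> \<le> M * (norm x)\<^sup>2))"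

definition C11_at :: "('a::euclidean_space \<Rightarrow> real) \<Rightarrow> 'a \<Rightarrow> bool" where
  "C11_at \<phi> x0 \<longleftrightarrow> (\<exists>p. c11_grad \<phi> x0 p)"

definition grad_at :: "('a::euclidean_space \<Rightarrow> real) \<Rightarrow> 'a \<Rightarrow> 'a" where
  "grad_at \<phi> x0 = (THE p. c11_grad \<phi> x0 p)"

definition inf_frac_lap :: "real \<Rightarrow> ('a::euclidean_space \<Rightarrow> real) \<Rightarrow> 'a \<Rightarrow> real" where
  "inf_frac_lap s \<phi> x =
    (if grad_at \<phi> x \<noteq> 0 then
       (let v = grad_at \<phi> x /\<^sub>R norm (grad_at \<phi> x) in
        LINT \<eta>:{0<..}|lborel. (\<phi> (x + \<eta> *\<^sub>R v) + \<phi> (x - \<eta> *\<^sub>R v) - 2 * \<phi> x) / \<eta> powr (1 + 2 * s))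
     else
       (SUP y\<in>sphere 0 1. LINT \<eta>:{0<..}|lborel. (\<phi> (x + \<eta> *\<^sub>R y) - \<phi> x) / \<eta> powr (1 + 2 * s))
     + (INF z\<in>sphere 0 1. LINT \<eta>:{0<..}|lborel. (\<phi> (x - \<eta> *\<^sub>R z) - \<phi> x) / \<eta> powr (1 + 2 * s)))"

definition usc :: "('a::metric_space \<Rightarrow> real) \<Rightarrow> bool" where
  "usc u \<longleftrightarrow> (\<forall>x e. e > 0 \<longrightarrow> (\<forall>\<^sub>F y in at x. u y < u x + e))"

definition lsc :: "('a::metric_space \<Rightarrow> real) \<Rightarrow> bool" where
  "lsc u \<longleftrightarrow> (\<forall>x e. e > 0 \<longrightarrow> (\<forall>\<^sub>F y in at x. u y > u x - e))"

definition viscosity_subsolution_at :: "real \<Rightarrow> ('a::euclidean_space \<Rightarrow> real) \<Rightarrow> 'a \<Rightarrow> bool" where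
  "viscosity_subsolution_at s u x0 \<longleftrightarrow> usc u \<and>
    (\<forall>r \<phi>. r > 0 \<and> C11_at \<phi> x0 \<and> continuous_on (cball x0 r) \<phi> \<and> \<phi> x0 = u x0 \<and>
       (\<forall>x\<in>ball x0 r - {x0}. \<phi> x > u x) \<longrightarrow>
       inf_frac_lap s (\<lambda>x. if x \<in> ball x0 r then \<phi> x else u x) x0 \<ge> 0)"

definition viscosity_supersolution_at :: "real \<Rightarrow> ('a::euclidean_space \<Rightarrow> real) \<Rightarrow> 'a \<Rightarrow> bool" where
  "viscosity_supersolution_at s u x0 \<longleftrightarrow> lsc u \<and>
    (\<forall>r \<phi>. r > 0 \<and> C11_at \<phi> x0 \<and> continuous_on (cball x0 r) \<phi> \<and> \<phi> x0 = u x0 \<and>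
       (\<forall>x\<in>ball x0 r - {x0}. \<phi> x < u x) \<longrightarrow>
       inf_frac_lap s (\<lambda>x. if x \<in> ball x0 r then \<phi> x else u x) x0 \<le> 0)"

definition viscosity_solution :: "real \<Rightarrow> ('a::euclidean_space \<Rightarrow> real) \<Rightarrow> 'a set \<Rightarrow> bool" where
  "viscosity_solution s u \<Omega> \<longleftrightarrow>
    (\<forall>x0\<in>\<Omega>. viscosity_subsolution_at s u x0 \<and> viscosity_supersolution_at s u x0)"

definition holder_seminorm :: "('a::metric_space \<Rightarrow> real) \<Rightarrow> 'a set \<Rightarrow> real \<Rightarrow> ereal" where
  "holder_seminorm f A \<gamma> =
     (SUP p\<in>{(x, y). x \<in> A \<and> y \<in> A \<and> x \<noteq> y}.
        ereal (\<bar>f (fst p) - f (snd p)\<bar> / dist (fst p) (snd p) powr \<gamma>))"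

definition holder :: "('a::metric_space \<Rightarrow> real) \<Rightarrow> 'a set \<Rightarrow> real \<Rightarrow> bool" where
  "holder f A \<gamma> \<longleftrightarrow> holder_seminorm f A \<gamma> < \<infinity>"

end

theory Submission
  imports Defs "HOL-Real_Asymp.Real_Asymp"
begin

text \<open>Suppose \<open>\<bar>u - a\<bar> \<le> L |\<cdot> - y|^(2s-1)\<close> outside \<open>\<Omega>\<close> and \<open>u y = a\<close> if \<open>y \<in> \<Omega>\<close>.
  If \<open>u - a - L |\<cdot> - y|^(2s-1)\<close> were positive somewhere, it would attain a positive maximum \<open>c\<close>
  at some \<open>x0 \<in> \<Omega>\<close>, \<open>x0 \<noteq> y\<close>, and the cone lifted by \<open>c\<close> plus \<open>eps |\<cdot> - x0|\<^sup>2\<close> would touch \<open>u\<close> from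
  above at \<open>x0\<close>. Its gradient points along \<open>x0 - y\<close>, so the operator becomes a one-dimensional
  integral along that ray. The exponent \<open>2s - 1\<close> is exactly the one for which the profile
  \<open>t \<mapsto> |R + t|^(2s-1)\<close> has vanishing second-difference integral; the quadratic correction
  contributes \<open>O(eps)\<close>, while outside \<open>\<Omega>\<close> the gap \<open>c\<close> contributes at most \<open>-2c/\<eta>^(1+2s)\<close>.
  For small \<open>eps\<close> the integral is negative, contradicting the subsolution property; the same
  argument for \<open>-u\<close> gives the lower bound. Cones centred at exterior points and then at interior
  points transfer the H\<ouml>lder bound of \<open>f\<close> to \<open>u\<close>.\<close>

lemma set_integral_Ioo_FTC_nonneg:
  fixes f F :: "real \<Rightarrow> real"
  assumes "a < b"
    and "\<And>x. a < x \<Longrightarrow> x < b \<Longrightarrow> DERIV F x :> f x"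
    and "\<And>x. a < x \<Longrightarrow> x < b \<Longrightarrow> isCont f x"
    and "\<And>x. a < x \<Longrightarrow> x < b \<Longrightarrow> 0 \<le> f x"
    and "(F \<longlongrightarrow> A) (at_right a)" and "(F \<longlongrightarrow> B) (at_left b)"
  shows "set_integrable lborel {a<..<b} f" "(LINT x:{a<..<b}|lborel. f x) = B - A"
proof -
  have "set_integrable lborel (einterval a b) f" "(LBINT x=ereal a..ereal b. f x) = B - A"
    using assms by (intro interval_integral_FTC_nonneg; auto simp: ereal_tendsto_simps1)+
  then show "set_integrable lborel {a<..<b} f" "(LINT x:{a<..<b}|lborel. f x) = B - A"
    using assms(1) by (simp_all add: interval_integral_Ioo)
qed

lemma set_integral_Ioi_FTC_nonneg:
  fixes f F :: "real \<Rightarrow> real"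
  assumes "\<And>x. a < x \<Longrightarrow> DERIV F x :> f x"
    and "\<And>x. a < x \<Longrightarrow> isCont f x"
    and "\<And>x. a < x \<Longrightarrow> 0 \<le> f x"
    and "(F \<longlongrightarrow> A) (at_right a)" and "(F \<longlongrightarrow> B) at_top"
  shows "set_integrable lborel {a<..} f" "(LINT x:{a<..}|lborel. f x) = B - A"
proof -
  have "set_integrable lborel (einterval a \<infinity>) f" "(LBINT x=ereal a..\<infinity>. f x) = B - A"
    using assms by (intro interval_integral_FTC_nonneg; auto simp: ereal_tendsto_simps1)+
  then show "set_integrable lborel {a<..} f" "(LINT x:{a<..}|lborel. f x) = B - A"
    by (simp_all add: interval_integral_to_infinity_eq)
qed

lemma set_integral_powr_Ioo:
  fixes p r :: real
  assumes "p > -1" "r > 0"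
  shows "set_integrable lborel {0<..<r} (\<lambda>x. x powr p)"
    "(LINT x:{0<..<r}|lborel. x powr p) = r powr (p + 1) / (p + 1)"
proof -
  have deriv: "DERIV (\<lambda>x. x powr (p + 1) / (p + 1)) x :> x powr p" if "0 < x" for x
    using that assms by (auto intro!: derivative_eq_intros)
  have cont: "isCont (\<lambda>x. x powr p) x" if "0 < x" for x
    using that by (auto intro!: continuous_intros)
  have "((\<lambda>x. x powr (p + 1) / (p + 1)) \<longlongrightarrow> 0) (at_right 0)"
    using assms by real_asymp
  moreover have "((\<lambda>x. x powr (p + 1) / (p + 1)) \<longlongrightarrow> r powr (p + 1) / (p + 1)) (at_left r)"
    using assms by (auto intro!: tendsto_eq_intros)
  ultimately show "set_integrable lborel {0<..<r} (\<lambda>x. x powr p)"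
    "(LINT x:{0<..<r}|lborel. x powr p) = r powr (p + 1) / (p + 1)"
    using set_integral_Ioo_FTC_nonneg[OF assms(2) deriv cont] by auto
qed

lemma set_integral_powr_Ioi:
  fixes q r :: real
  assumes "q > 1" "r > 0"
  shows "set_integrable lborel {r<..} (\<lambda>x. x powr (- q))"
    "(LINT x:{r<..}|lborel. x powr (- q)) = r powr (1 - q) / (q - 1)"
proof -
  have deriv: "DERIV (\<lambda>x. - (x powr (1 - q) / (q - 1))) x :> x powr (- q)" if "r < x" for x
  proof -
    have "((\<lambda>x. x powr (1 - q)) has_real_derivative (1 - q) * x powr (- q)) (at x)"
      using has_real_derivative_powr[of x "1 - q"] that assms by simp
    from DERIV_minus[OF DERIV_cdivide[OF this, of "q - 1"]] show ?thesis
      by (rule DERIV_cong) (use assms in \<open>simp add: field_simps\<close>)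
  qed
  have cont: "isCont (\<lambda>x. x powr (- q)) x" if "r < x" for x
    using that assms by (auto intro!: continuous_intros)
  have "((\<lambda>x. - (x powr (1 - q) / (q - 1))) \<longlongrightarrow> - (r powr (1 - q) / (q - 1))) (at_right r)"
    using assms by (auto intro!: tendsto_eq_intros)
  moreover have "((\<lambda>x. - (x powr (1 - q) / (q - 1))) \<longlongrightarrow> 0) at_top"
    using assms by real_asymp
  ultimately show "set_integrable lborel {r<..} (\<lambda>x. x powr (- q))"
    "(LINT x:{r<..}|lborel. x powr (- q)) = r powr (1 - q) / (q - 1)"
    using set_integral_Ioi_FTC_nonneg[OF deriv cont] by auto
qed

lemma set_integral_Ioi_split:
  fixes f :: "real \<Rightarrow> real"
  assumes "r > a" "set_integrable lborel {a<..<r} f" "set_integrable lborel {r<..} f"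
  shows "set_integrable lborel {a<..} f"
    "(LINT x:{a<..}|lborel. f x) = (LINT x:{a<..<r}|lborel. f x) + (LINT x:{r<..}|lborel. f x)"
proof -
  have int_Un: "set_integrable lborel ({a<..<r} \<union> {r<..}) f"
    by (rule set_integrable_Un[OF assms(2,3)]) auto
  have diff: "({a<..<r} \<union> {r<..} - {a<..}) \<union> ({a<..} - ({a<..<r} \<union> {r<..})) \<subseteq> {r}"
    using assms(1) by auto
  show "set_integrable lborel {a<..} f"
    using set_integrable_discrete_difference[of "{r}" _ _ lborel f, OF _ diff] int_Un by simp
  have "(LINT x:{a<..}|lborel. f x) = (LINT x:{a<..<r} \<union> {r<..}|lborel. f x)"
    using set_integral_discrete_difference[of "{r}" _ _ lborel f, OF _ diff] by simp
  also have "\<dots> = (LINT x:{a<..<r}|lborel. f x) + (LINT x:{r<..}|lborel. f x)"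
    by (rule set_integral_Un[OF _ assms(2,3)]) auto
  finally show "(LINT x:{a<..}|lborel. f x) = (LINT x:{a<..<r}|lborel. f x) + (LINT x:{r<..}|lborel. f x)" .
qed

lemma set_integrable_continuous_bound:
  fixes f g :: "real \<Rightarrow> real"
  assumes "open S" "continuous_on S f" "set_integrable lborel S g"
    and "\<And>x. x \<in> S \<Longrightarrow> \<bar>f x\<bar> \<le> g x"
  shows "set_integrable lborel S f"
proof (rule set_integrable_bound[OF assms(3)])
  show "set_borel_measurable lborel S f"
    unfolding set_borel_measurable_def
    using borel_measurable_continuous_on_indicator[OF _ assms(2)] assms(1) by simp
  show "AE x in lborel. x \<in> S \<longrightarrow> norm (f x) \<le> norm (g x)"
    using assms(4) by (auto intro!: AE_I2 order_trans[OF _ abs_ge_self])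
qed

definition second_difference_quotient :: "real \<Rightarrow> (real \<Rightarrow> real) \<Rightarrow> real \<Rightarrow> real" where
  "second_difference_quotient s w \<eta> = (w \<eta> + w (- \<eta>) - 2 * w 0) / \<eta> powr (1 + 2 * s)"

text \<open>The integrand of the one-dimensional operator applied to \<open>t \<mapsto> |R + t|^(2s-1)\<close> at \<open>t = 0\<close>;
  the absolute value on \<open>R + \<eta>\<close> is dropped since only \<open>\<eta> > 0\<close> matters.\<close>

definition cone_second_difference :: "real \<Rightarrow> real \<Rightarrow> real \<Rightarrow> real" where
  "cone_second_difference s R \<eta> =
     ((R + \<eta>) powr (2 * s - 1) + \<bar>R - \<eta>\<bar> powr (2 * s - 1) - 2 * R powr (2 * s - 1)) / \<eta> powr (1 + 2 * s)"

lemma powr_midpoint_concave: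
  fixes b R x :: real
  assumes "0 < b" "b < 1" "0 < x" "x < R"
  shows "(R + x) powr b + (R - x) powr b \<le> 2 * R powr b"
proof -
  have "(R + x) powr b * R powr (1 - b) \<le> b * (R + x) + (1 - b) * R"
    "(R - x) powr b * R powr (1 - b) \<le> b * (R - x) + (1 - b) * R"
    using assms by (intro Youngs_inequality_0; simp)+
  moreover have "R powr b * R powr (1 - b) = R"
    using assms by (simp add: powr_add[symmetric])
  ultimately have "((R + x) powr b + (R - x) powr b) * R powr (1 - b) \<le> (2 * R powr b) * R powr (1 - b)"
    by (simp add: algebra_simps)
  then show ?thesis using assms by (simp add: mult_le_cancel_right)
qed

lemma powr_eq_mult_powr_minus1: "y > 0 \<Longrightarrow> y powr a = y * y powr (a - 1)"
  for y a :: real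
  by (simp add: powr_mult_base)

lemma cone_antiderivative_inner:
  fixes s R \<eta> :: real
  assumes "0 < s" "0 < \<eta>" "\<eta> < R"
  shows "DERIV (\<lambda>\<eta>. ((R + \<eta>) powr (2 * s) + (R - \<eta>) powr (2 * s) - 2 * R powr (2 * s)) / (2 * s * R * \<eta> powr (2 * s))) \<eta>
    :> - cone_second_difference s R \<eta>"
proof -
  have pos: "0 < R + \<eta>" "0 < R - \<eta>" "0 < R" using assms by auto
  show ?thesis
    unfolding cone_second_difference_def using assms
    by (auto intro!: derivative_eq_intros)
      (simp add: powr_eq_mult_powr_minus1[OF pos(1), of "2 * s"] powr_eq_mult_powr_minus1[OF pos(2), of "2 * s"]
        powr_eq_mult_powr_minus1[OF pos(3), of "2 * s"] powr_eq_mult_powr_minus1[OF assms(2), of "2 * s"]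
        powr_eq_mult_powr_minus1[OF assms(2), of "1 + 2 * s"] abs_of_pos,
       simp add: field_simps)
qed

lemma cone_antiderivative_outer:
  fixes s R \<eta> :: real
  assumes "0 < s" "0 < R" "R < \<eta>"
  shows "DERIV (\<lambda>\<eta>. ((\<eta> - R) powr (2 * s) - (R + \<eta>) powr (2 * s)) / (2 * s * R * \<eta> powr (2 * s))) \<eta>
    :> ((R + \<eta>) powr (2 * s - 1) + (\<eta> - R) powr (2 * s - 1)) / \<eta> powr (1 + 2 * s)"
proof -
  have pos: "0 < R + \<eta>" "0 < \<eta> - R" "0 < \<eta>" using assms by auto
  show ?thesis
    using assms
    by (auto intro!: derivative_eq_intros)
      (simp add: powr_eq_mult_powr_minus1[OF pos(1), of "2 * s"] powr_eq_mult_powr_minus1[OF pos(2), of "2 * s"]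
        powr_eq_mult_powr_minus1[OF assms(2), of "2 * s"] powr_eq_mult_powr_minus1[OF pos(3), of "2 * s"]
        powr_eq_mult_powr_minus1[OF pos(3), of "1 + 2 * s"],
       simp add: field_simps)
qed

lemma cone_second_difference_integral_inner:
  fixes s R :: real
  assumes s: "1/2 < s" "s < 1" and R: "0 < R"
  shows "set_integrable lborel {0<..<R} (cone_second_difference s R)"
    "(LINT \<eta>:{0<..<R}|lborel. cone_second_difference s R \<eta>) = (2 - 2 powr (2 * s)) / (2 * s * R)"
proof -
  define F where "F \<eta> = ((R + \<eta>) powr (2 * s) + (R - \<eta>) powr (2 * s) - 2 * R powr (2 * s)) / (2 * s * R * \<eta> powr (2 * s))" for \<eta>
  define f where "f \<eta> = - cone_second_difference s R \<eta>" for \<eta>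
  have deriv: "DERIV F \<eta> :> f \<eta>" if "0 < \<eta>" "\<eta> < R" for \<eta>
    unfolding F_def f_def using s that by (intro cone_antiderivative_inner) auto
  have cont: "isCont f \<eta>" if "0 < \<eta>" "\<eta> < R" for \<eta>
    using that unfolding f_def cone_second_difference_def by (auto intro!: continuous_intros)
  have nonneg: "0 \<le> f \<eta>" if "0 < \<eta>" "\<eta> < R" for \<eta>
    using powr_midpoint_concave[of "2 * s - 1" \<eta> R] that s
    unfolding f_def cone_second_difference_def by (auto simp: divide_nonpos_pos)
  have "(F \<longlongrightarrow> 0) (at_right 0)"
    unfolding F_def using s R by real_asymp
  moreover have "(F \<longlongrightarrow> (2 powr (2 * s) - 2) / (2 * s * R)) (at_left R)"
    unfolding F_def using s R by real_asymp (simp add: powr_mult field_simps)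
  ultimately have int: "set_integrable lborel {0<..<R} f"
    and val: "(LINT \<eta>:{0<..<R}|lborel. f \<eta>) = (2 powr (2 * s) - 2) / (2 * s * R)"
    using set_integral_Ioo_FTC_nonneg[OF R deriv cont nonneg] by auto
  have eq: "cone_second_difference s R = (\<lambda>\<eta>. - f \<eta>)"
    unfolding f_def by simp
  show "set_integrable lborel {0<..<R} (cone_second_difference s R)"
    unfolding eq using set_integrable_mult_right[of "-1", OF int] by simp
  show "(LINT \<eta>:{0<..<R}|lborel. cone_second_difference s R \<eta>) = (2 - 2 powr (2 * s)) / (2 * s * R)"
    unfolding eq set_integral_uminus[OF int] val by (simp add: minus_divide_left)
qed

lemma cone_second_difference_integral_outer:
  fixes s R :: real
  assumes s: "1/2 < s" "s < 1" and R: "0 < R"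
  shows "set_integrable lborel {R<..} (cone_second_difference s R)"
    "(LINT \<eta>:{R<..}|lborel. cone_second_difference s R \<eta>) = (2 powr (2 * s) - 2) / (2 * s * R)"
proof -
  define F where "F \<eta> = ((\<eta> - R) powr (2 * s) - (R + \<eta>) powr (2 * s)) / (2 * s * R * \<eta> powr (2 * s))" for \<eta>
  define f where "f \<eta> = ((R + \<eta>) powr (2 * s - 1) + (\<eta> - R) powr (2 * s - 1)) / \<eta> powr (1 + 2 * s)" for \<eta>
  define h where "h \<eta> = 2 * R powr (2 * s - 1) * \<eta> powr (- (1 + 2 * s))" for \<eta>
  have deriv: "DERIV F \<eta> :> f \<eta>" if "R < \<eta>" for \<eta>
    unfolding F_def f_def using s R that by (intro cone_antiderivative_outer) auto
  have cont: "isCont f \<eta>" if "R < \<eta>" for \<eta>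
    using that R unfolding f_def by (auto intro!: continuous_intros)
  have nonneg: "0 \<le> f \<eta>" for \<eta>
    unfolding f_def by simp
  have "(F \<longlongrightarrow> - (2 powr (2 * s)) / (2 * s * R)) (at_right R)"
    unfolding F_def using s R by real_asymp (simp add: powr_mult field_simps)
  moreover have "(F \<longlongrightarrow> 0) at_top"
    unfolding F_def using s R by real_asymp
  ultimately have int_f: "set_integrable lborel {R<..} f"
    and val_f: "(LINT \<eta>:{R<..}|lborel. f \<eta>) = 2 powr (2 * s) / (2 * s * R)"
    using set_integral_Ioi_FTC_nonneg[OF deriv cont nonneg] by auto
  have int_h: "set_integrable lborel {R<..} h"
    and val_h: "(LINT \<eta>:{R<..}|lborel. h \<eta>) = 2 / (2 * s * R)"
  proof -
    note powr = set_integral_powr_Ioi[of "1 + 2 * s" R]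
    show "set_integrable lborel {R<..} h"
      unfolding h_def using powr(1) s R by simp
    have "(LINT \<eta>:{R<..}|lborel. \<eta> powr (- (1 + 2 * s))) = R powr (- (2 * s)) / (2 * s)"
      using powr(2) s R by simp
    moreover have "R powr (2 * s - 1) * R powr (- (2 * s)) = 1 / R"
      using R by (simp add: powr_add[symmetric])
    ultimately show "(LINT \<eta>:{R<..}|lborel. h \<eta>) = 2 / (2 * s * R)"
      unfolding h_def set_integral_mult_right by (simp add: field_simps)
  qed
  have eq: "cone_second_difference s R \<eta> = f \<eta> - h \<eta>" if "\<eta> \<in> {R<..}" for \<eta>
    using that R unfolding cone_second_difference_def f_def h_def powr_minus_divide
    by (simp add: diff_divide_distrib add_divide_distrib)
  show "set_integrable lborel {R<..} (cone_second_difference s R)"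
    using set_integral_diff(1)[OF int_f int_h] set_integrable_cong[of lborel lborel "{R<..}" "{R<..}", OF _ _ eq]
    by simp
  have "(LINT \<eta>:{R<..}|lborel. cone_second_difference s R \<eta>) = (LINT \<eta>:{R<..}|lborel. f \<eta> - h \<eta>)"
    using eq by (intro set_lebesgue_integral_cong) auto
  also have "\<dots> = (2 powr (2 * s) - 2) / (2 * s * R)"
    using set_integral_diff(2)[OF int_f int_h] val_f val_h by (simp add: diff_divide_distrib)
  finally show "(LINT \<eta>:{R<..}|lborel. cone_second_difference s R \<eta>) = (2 powr (2 * s) - 2) / (2 * s * R)" .
qed

lemma cone_second_difference_integral:
  fixes s R :: real
  assumes "1/2 < s" "s < 1" "0 < R"
  shows "set_integrable lborel {0<..} (cone_second_difference s R)"
    "(LINT \<eta>:{0<..}|lborel. cone_second_difference s R \<eta>) = 0"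
  using set_integral_Ioi_split[OF assms(3)]
    cone_second_difference_integral_inner[OF assms] cone_second_difference_integral_outer[OF assms]
  by (simp_all add: diff_divide_distrib)

lemma c11_grad_unique:
  fixes \<phi> :: "'a::euclidean_space \<Rightarrow> real"
  assumes "c11_grad \<phi> x p" "c11_grad \<phi> x q"
  shows "p = q"
proof (rule ccontr)
  assume "p \<noteq> q"
  then have d: "norm (p - q) > 0" by simp
  obtain M1 e1 where M1: "M1 > 0" "e1 > 0" "\<And>h. norm h < e1 \<Longrightarrow> \<bar>\<phi> (x + h) - \<phi> x - p \<bullet> h\<bar> \<le> M1 * (norm h)\<^sup>2"
    using assms(1) unfolding c11_grad_def by blast
  obtain M2 e2 where M2: "M2 > 0" "e2 > 0" "\<And>h. norm h < e2 \<Longrightarrow> \<bar>\<phi> (x + h) - \<phi> x - q \<bullet> h\<bar> \<le> M2 * (norm h)\<^sup>2"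
    using assms(2) unfolding c11_grad_def by blast
  define t where "t = min (min e1 e2 / (2 * norm (p - q))) (1 / (2 * (M1 + M2)))"
  define h where "h = t *\<^sub>R (p - q)"
  have t: "t > 0" "t * (M1 + M2) \<le> 1/2"
    using d M1 M2 by (auto simp: t_def field_simps min_def)
  have "t \<le> min e1 e2 / (2 * norm (p - q))"
    unfolding t_def by simp
  then have "norm h \<le> min e1 e2 / 2"
    using d t unfolding h_def by (simp add: pos_le_divide_eq mult.commute)
  then have "\<bar>\<phi> (x + h) - \<phi> x - p \<bullet> h\<bar> \<le> M1 * (norm h)\<^sup>2" "\<bar>\<phi> (x + h) - \<phi> x - q \<bullet> h\<bar> \<le> M2 * (norm h)\<^sup>2"
    using M1 M2 by (intro M1(3) M2(3); simp)+
  moreover have "(p - q) \<bullet> h = t * (norm (p - q))\<^sup>2" "(norm h)\<^sup>2 = t\<^sup>2 * (norm (p - q))\<^sup>2"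
    using t unfolding h_def by (simp_all add: power2_norm_eq_inner power_mult_distrib)
  ultimately have "t * (norm (p - q))\<^sup>2 \<le> (t * (M1 + M2)) * (t * (norm (p - q))\<^sup>2)"
    by (simp add: abs_le_iff inner_diff_left power2_eq_square algebra_simps)
  also have "\<dots> \<le> 1/2 * (t * (norm (p - q))\<^sup>2)"
    using t by (intro mult_right_mono) auto
  finally show False using t d by simp
qed

lemma grad_at_eq: "c11_grad \<phi> x p \<Longrightarrow> grad_at \<phi> x = p"
  unfolding grad_at_def by (rule the_equality) (auto intro: c11_grad_unique)

lemma c11_grad_const: "c11_grad (\<lambda>_. A) x 0"
  unfolding c11_grad_def by (rule exI[of _ 1], rule exI[of _ 1]) simp

lemma c11_grad_add:
  fixes f g :: "'a::euclidean_space \<Rightarrow> real"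
  assumes "c11_grad f x p" "c11_grad g x q"
  shows "c11_grad (\<lambda>z. f z + g z) x (p + q)"
proof -
  obtain M1 e1 where M1: "M1 > 0" "e1 > 0" "\<And>h. norm h < e1 \<Longrightarrow> \<bar>f (x + h) - f x - p \<bullet> h\<bar> \<le> M1 * (norm h)\<^sup>2"
    using assms(1) unfolding c11_grad_def by blast
  obtain M2 e2 where M2: "M2 > 0" "e2 > 0" "\<And>h. norm h < e2 \<Longrightarrow> \<bar>g (x + h) - g x - q \<bullet> h\<bar> \<le> M2 * (norm h)\<^sup>2"
    using assms(2) unfolding c11_grad_def by blast
  show ?thesis
    unfolding c11_grad_def
  proof (intro exI conjI allI impI)
    fix h :: 'a assume "norm h < min e1 e2"
    then have "\<bar>f (x + h) - f x - p \<bullet> h\<bar> + \<bar>g (x + h) - g x - q \<bullet> h\<bar> \<le> (M1 + M2) * (norm h)\<^sup>2"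
      using M1(3) M2(3) by (simp add: distrib_right add_mono)
    moreover have "f (x + h) + g (x + h) - (f x + g x) - (p + q) \<bullet> h
        = (f (x + h) - f x - p \<bullet> h) + (g (x + h) - g x - q \<bullet> h)"
      by (simp add: inner_add_left)
    ultimately show "\<bar>f (x + h) + g (x + h) - (f x + g x) - (p + q) \<bullet> h\<bar> \<le> (M1 + M2) * (norm h)\<^sup>2"
      by (metis abs_triangle_ineq order_trans)
  qed (use M1 M2 in auto)
qed

lemma c11_grad_cmult:
  fixes f :: "'a::euclidean_space \<Rightarrow> real"
  assumes "c11_grad f x p"
  shows "c11_grad (\<lambda>z. c * f z) x (c *\<^sub>R p)"
proof -
  obtain M e where M: "M > 0" "e > 0" "\<And>h. norm h < e \<Longrightarrow> \<bar>f (x + h) - f x - p \<bullet> h\<bar> \<le> M * (norm h)\<^sup>2"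
    using assms unfolding c11_grad_def by blast
  show ?thesis
    unfolding c11_grad_def
  proof (intro exI conjI allI impI)
    fix h :: 'a assume "norm h < e"
    have "\<bar>c * f (x + h) - c * f x - (c *\<^sub>R p) \<bullet> h\<bar> = \<bar>c\<bar> * \<bar>f (x + h) - f x - p \<bullet> h\<bar>"
      by (simp add: abs_mult[symmetric] algebra_simps)
    also have "\<dots> \<le> (\<bar>c\<bar> + 1) * (M * (norm h)\<^sup>2)"
      using M(3)[OF \<open>norm h < e\<close>] by (intro mult_mono) auto
    finally show "\<bar>c * f (x + h) - c * f x - (c *\<^sub>R p) \<bullet> h\<bar> \<le> (\<bar>c\<bar> + 1) * M * (norm h)\<^sup>2"
      by (simp add: mult.assoc)
  qed (use M in auto)
qed

lemma c11_grad_compose: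
  fixes \<phi> :: "'a::euclidean_space \<Rightarrow> real" and g :: "real \<Rightarrow> real"
  assumes g: "c11_grad g (\<phi> x) d" and \<phi>: "c11_grad \<phi> x p"
  shows "c11_grad (\<lambda>z. g (\<phi> z)) x (d *\<^sub>R p)"
proof -
  obtain Mg eg where Mg: "Mg > 0" "eg > 0"
    and g_bound: "\<And>k. \<bar>k\<bar> < eg \<Longrightarrow> \<bar>g (\<phi> x + k) - g (\<phi> x) - d * k\<bar> \<le> Mg * k\<^sup>2"
    using g unfolding c11_grad_def by auto
  obtain M e where M: "M > 0" "e > 0"
    and \<phi>_bound: "\<And>h. norm h < e \<Longrightarrow> \<bar>\<phi> (x + h) - \<phi> x - p \<bullet> h\<bar> \<le> M * (norm h)\<^sup>2"
    using \<phi> unfolding c11_grad_def by blast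
  define K where "K = norm p + M"
  have K: "K \<ge> 0" using M unfolding K_def by simp
  show ?thesis
    unfolding c11_grad_def
  proof (intro exI conjI allI impI)
    fix h :: 'a assume h: "norm h < min e (min 1 (eg / (K + 1)))"
    define k where "k = \<phi> (x + h) - \<phi> x"
    have rem: "\<bar>k - p \<bullet> h\<bar> \<le> M * (norm h)\<^sup>2"
      using \<phi>_bound h unfolding k_def by simp
    have "\<bar>k\<bar> \<le> norm p * norm h + M * (norm h)\<^sup>2"
      using rem Cauchy_Schwarz_ineq2[of p h] by linarith
    also have "\<dots> \<le> K * norm h"
      using h M unfolding K_def power2_eq_square by (simp add: distrib_right mult_left_le)
    finally have k_le: "\<bar>k\<bar> \<le> K * norm h" .
    have "K * norm h \<le> (K + 1) * norm h" by (simp add: distrib_right)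
    also have "\<dots> < eg"
      using h K by (simp add: less_divide_eq mult.commute)
    finally have "\<bar>k\<bar> < eg"
      using k_le by linarith
    then have "\<bar>g (\<phi> x + k) - g (\<phi> x) - d * k\<bar> \<le> Mg * k\<^sup>2"
      by (rule g_bound)
    also have "\<dots> \<le> Mg * (K * norm h)\<^sup>2"
      using k_le Mg K by (intro mult_left_mono) (auto simp: power2_le_iff_abs_le)
    finally have g_rem: "\<bar>g (\<phi> x + k) - g (\<phi> x) - d * k\<bar> \<le> Mg * K\<^sup>2 * (norm h)\<^sup>2"
      by (simp add: power_mult_distrib)
    have d_rem: "\<bar>d * k - d * (p \<bullet> h)\<bar> \<le> \<bar>d\<bar> * M * (norm h)\<^sup>2"
      using mult_left_mono[OF rem abs_ge_zero[of d]] by (simp add: abs_mult[symmetric] right_diff_distrib mult.assoc)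
    have "\<bar>g (\<phi> (x + h)) - g (\<phi> x) - (d *\<^sub>R p) \<bullet> h\<bar> \<le> Mg * K\<^sup>2 * (norm h)\<^sup>2 + \<bar>d\<bar> * M * (norm h)\<^sup>2"
      using g_rem d_rem unfolding k_def by (simp add: abs_le_iff)
    also have "\<dots> \<le> (Mg * K\<^sup>2 + \<bar>d\<bar> * M + 1) * (norm h)\<^sup>2"
      by (simp add: algebra_simps)
    finally show "\<bar>g (\<phi> (x + h)) - g (\<phi> x) - (d *\<^sub>R p) \<bullet> h\<bar> \<le> (Mg * K\<^sup>2 + \<bar>d\<bar> * M + 1) * (norm h)\<^sup>2" .
  qed (use M Mg K in \<open>auto intro!: add_nonneg_pos\<close>)
qed

lemma powr_taylor_lagrange:
  fixes b t0 h :: real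
  assumes t0: "0 < t0" and h: "\<bar>h\<bar> < t0 / 2"
  obtains \<xi> where "t0 / 2 \<le> \<xi>" "\<xi> \<le> 2 * t0"
    "(t0 + h) powr b - t0 powr b - b * t0 powr (b - 1) * h = b * (b - 1) * \<xi> powr (b - 2) / 2 * h\<^sup>2"
proof (cases "h = 0")
  case True
  then show ?thesis using that[of t0] t0 by simp
next
  case False
  define diff where "diff n = (if n = 0 then (\<lambda>t. t powr b)
      else if n = 1 then (\<lambda>t. b * t powr (b - 1)) else (\<lambda>t. b * (b - 1) * t powr (b - 2)))" for n :: nat
  have deriv: "\<forall>m t. m < 2 \<and> t0 / 2 \<le> t \<and> t \<le> 2 * t0 \<longrightarrow> DERIV (diff m) t :> diff (Suc m) t"
  proof (intro allI impI)
    fix m :: nat and t :: real assume m: "m < 2 \<and> t0 / 2 \<le> t \<and> t \<le> 2 * t0"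
    then have "m = 0 \<or> m = 1" "t > 0" using t0 by auto
    then show "DERIV (diff m) t :> diff (Suc m) t"
      unfolding diff_def by (auto intro!: derivative_eq_intros simp: algebra_simps)
  qed
  have "\<exists>\<xi>. (if t0 + h < t0 then t0 + h < \<xi> \<and> \<xi> < t0 else t0 < \<xi> \<and> \<xi> < t0 + h) \<and>
      (t0 + h) powr b = (\<Sum>m<2. diff m t0 / fact m * (t0 + h - t0) ^ m) + diff 2 \<xi> / fact 2 * (t0 + h - t0) ^ 2"
    by (rule Taylor[of 2 diff _ "t0 / 2" "2 * t0"]) (use deriv h t0 False in \<open>auto simp: diff_def\<close>)
  then obtain \<xi> where \<xi>: "if t0 + h < t0 then t0 + h < \<xi> \<and> \<xi> < t0 else t0 < \<xi> \<and> \<xi> < t0 + h"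
    and taylor: "(t0 + h) powr b = (\<Sum>m<2. diff m t0 / fact m * (t0 + h - t0) ^ m) + diff 2 \<xi> / fact 2 * (t0 + h - t0) ^ 2"
    by blast
  show ?thesis
  proof (rule that)
    show "t0 / 2 \<le> \<xi>" "\<xi> \<le> 2 * t0" using \<xi> h by (auto split: if_splits)
    show "(t0 + h) powr b - t0 powr b - b * t0 powr (b - 1) * h = b * (b - 1) * \<xi> powr (b - 2) / 2 * h\<^sup>2"
      using taylor by (simp add: diff_def numeral_2_eq_2)
  qed
qed

lemma c11_grad_powr:
  fixes b t0 :: real
  assumes t0: "0 < t0"
  shows "c11_grad (\<lambda>t. t powr b) t0 (b * t0 powr (b - 1))"
proof -
  define K where "K = \<bar>b * (b - 1)\<bar> * ((t0 / 2) powr (b - 2) + (2 * t0) powr (b - 2))"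
  have remainder: "\<bar>(t0 + h) powr b - t0 powr b - b * t0 powr (b - 1) * h\<bar> \<le> K * h\<^sup>2"
    if h: "\<bar>h\<bar> < t0 / 2" for h
  proof -
    obtain \<xi> where \<xi>: "t0 / 2 \<le> \<xi>" "\<xi> \<le> 2 * t0"
      and eq: "(t0 + h) powr b - t0 powr b - b * t0 powr (b - 1) * h = b * (b - 1) * \<xi> powr (b - 2) / 2 * h\<^sup>2"
      using powr_taylor_lagrange[OF t0 h] .
    have "\<xi> powr (b - 2) \<le> (t0 / 2) powr (b - 2) + (2 * t0) powr (b - 2)"
    proof (cases "b \<le> 2")
      case True
      then have "\<xi> powr (b - 2) \<le> (t0 / 2) powr (b - 2)"
        using \<xi> t0 by (intro powr_mono2') auto
      then show ?thesis by (simp add: add_increasing2)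
    next
      case False
      then have "\<xi> powr (b - 2) \<le> (2 * t0) powr (b - 2)"
        using \<xi> t0 by (intro powr_mono2) auto
      then show ?thesis by (simp add: add_increasing)
    qed
    then have "\<bar>b * (b - 1)\<bar> * \<xi> powr (b - 2) \<le> K"
      unfolding K_def by (rule mult_left_mono) simp
    then have "\<bar>b * (b - 1)\<bar> * \<xi> powr (b - 2) * h\<^sup>2 \<le> K * h\<^sup>2"
      by (rule mult_right_mono) simp
    moreover have "\<bar>b * (b - 1) * \<xi> powr (b - 2) / 2 * h\<^sup>2\<bar> = \<bar>b * (b - 1)\<bar> * \<xi> powr (b - 2) * h\<^sup>2 / 2"
      by (simp add: abs_mult)
    moreover have "0 \<le> \<bar>b * (b - 1)\<bar> * \<xi> powr (b - 2) * h\<^sup>2"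
      by simp
    ultimately show ?thesis
      unfolding eq by linarith
  qed
  have "0 \<le> K" unfolding K_def by simp
  show ?thesis
    unfolding c11_grad_def
  proof (rule exI[of _ "K + 1"], rule exI[of _ "t0 / 2"], intro conjI allI impI)
    fix h :: real assume "norm h < t0 / 2"
    then have "\<bar>(t0 + h) powr b - t0 powr b - b * t0 powr (b - 1) * h\<bar> \<le> K * h\<^sup>2"
      by (intro remainder) simp
    then show "\<bar>(t0 + h) powr b - t0 powr b - (b * t0 powr (b - 1)) \<bullet> h\<bar> \<le> (K + 1) * (norm h)\<^sup>2"
      by (simp add: distrib_right add_increasing2)
  qed (use t0 \<open>0 \<le> K\<close> in simp_all)
qed

lemma c11_grad_norm_diff_square:
  fixes x y :: "'a::euclidean_space"
  shows "c11_grad (\<lambda>z. (norm (z - y))\<^sup>2) x (2 *\<^sub>R (x - y))"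
  unfolding c11_grad_def
proof (intro exI[of _ 1] conjI allI impI)
  fix h :: 'a
  have "(norm (x + h - y))\<^sup>2 - (norm (x - y))\<^sup>2 - (2 *\<^sub>R (x - y)) \<bullet> h = (norm h)\<^sup>2"
    by (simp add: power2_norm_eq_inner inner_add_left inner_add_right inner_diff_left inner_diff_right inner_commute)
  then show "\<bar>(norm (x + h - y))\<^sup>2 - (norm (x - y))\<^sup>2 - (2 *\<^sub>R (x - y)) \<bullet> h\<bar> \<le> 1 * (norm h)\<^sup>2"
    by simp
qed simp_all

lemma c11_grad_norm_diff_powr:
  fixes x y :: "'a::euclidean_space" and a :: real
  assumes "x \<noteq> y"
  shows "c11_grad (\<lambda>z. norm (z - y) powr a) x ((a * norm (x - y) powr (a - 2)) *\<^sub>R (x - y))"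
proof -
  have sq_powr: "((norm v)\<^sup>2) powr c = norm v powr (2 * c)" for v :: 'a and c
    by (cases "v = 0") (simp_all add: powr_powr[symmetric] powr_numeral)
  have "c11_grad (\<lambda>z. ((norm (z - y))\<^sup>2) powr (a / 2)) x
      ((a / 2 * ((norm (x - y))\<^sup>2) powr (a / 2 - 1)) *\<^sub>R (2 *\<^sub>R (x - y)))"
    using assms by (intro c11_grad_compose c11_grad_powr c11_grad_norm_diff_square) simp
  then show ?thesis
    by (simp add: sq_powr algebra_simps)
qed

lemma c11_grad_if_ball:
  fixes \<phi> u :: "'a::euclidean_space \<Rightarrow> real"
  assumes "c11_grad \<phi> x p" "r > 0"
  shows "c11_grad (\<lambda>z. if z \<in> ball x r then \<phi> z else u z) x p"
proof -
  obtain M e where "M > 0" "e > 0" "\<And>h. norm h < e \<Longrightarrow> \<bar>\<phi> (x + h) - \<phi> x - p \<bullet> h\<bar> \<le> M * (norm h)\<^sup>2"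
    using assms(1) unfolding c11_grad_def by blast
  with assms(2) show ?thesis
    unfolding c11_grad_def
    by (intro exI[of "\<lambda>M. \<exists>\<eta>. _ M \<eta>" M] exI[of _ "min e r"]) (auto simp: dist_norm)
qed

definition directional_frac_lap :: "real \<Rightarrow> ('a::euclidean_space \<Rightarrow> real) \<Rightarrow> 'a \<Rightarrow> 'a \<Rightarrow> real" where
  "directional_frac_lap s \<phi> x v = (LINT \<eta>:{0<..}|lborel. second_difference_quotient s (\<lambda>t. \<phi> (x + t *\<^sub>R v)) \<eta>)"

lemma inf_frac_lap_nonzero_grad:
  fixes \<phi> :: "'a::euclidean_space \<Rightarrow> real"
  assumes "c11_grad \<phi> x p" "p \<noteq> 0"
  shows "inf_frac_lap s \<phi> x = directional_frac_lap s \<phi> x (p /\<^sub>R norm p)"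
  unfolding inf_frac_lap_def directional_frac_lap_def second_difference_quotient_def grad_at_eq[OF assms(1)]
  using assms(2) by simp

lemma directional_frac_lap_uminus:
  fixes \<phi> :: "'a::euclidean_space \<Rightarrow> real"
  shows "directional_frac_lap s (\<lambda>z. - \<phi> z) x (- v) = - directional_frac_lap s \<phi> x v"
proof -
  have "second_difference_quotient s (\<lambda>t. - \<phi> (x + t *\<^sub>R - v)) \<eta>
      = - second_difference_quotient s (\<lambda>t. \<phi> (x + t *\<^sub>R v)) \<eta>" for \<eta>
  proof -
    have "- \<phi> (x + \<eta> *\<^sub>R - v) + - \<phi> (x + - \<eta> *\<^sub>R - v) - 2 * - \<phi> (x + 0 *\<^sub>R - v)
        = - (\<phi> (x + \<eta> *\<^sub>R v) + \<phi> (x + - \<eta> *\<^sub>R v) - 2 * \<phi> (x + 0 *\<^sub>R v))"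
      by simp
    then show ?thesis
      unfolding second_difference_quotient_def by (simp only: minus_divide_left)
  qed
  then show ?thesis
    unfolding directional_frac_lap_def set_lebesgue_integral_def by (simp add: integral_minus)
qed

lemma inf_frac_lap_uminus:
  fixes \<phi> :: "'a::euclidean_space \<Rightarrow> real"
  assumes "c11_grad \<phi> x p" "p \<noteq> 0"
  shows "inf_frac_lap s (\<lambda>z. - \<phi> z) x = - inf_frac_lap s \<phi> x"
proof -
  have "c11_grad (\<lambda>z. - \<phi> z) x (- p)"
    using c11_grad_cmult[OF assms(1), of "-1"] by simp
  then show ?thesis
    using assms directional_frac_lap_uminus[of s \<phi> x "p /\<^sub>R norm p"]
    by (simp add: inf_frac_lap_nonzero_grad)
qed

text \<open>Comparison with cones only tests functions with nonzero gradient, and for those the operator is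
  odd (\<open>inf_frac_lap_uminus\<close>), so a supersolution \<open>u\<close> yields this property for \<open>-u\<close>.\<close>

definition nonzero_grad_subsolution_at :: "real \<Rightarrow> ('a::euclidean_space \<Rightarrow> real) \<Rightarrow> 'a \<Rightarrow> bool" where
  "nonzero_grad_subsolution_at s u x0 \<longleftrightarrow>
    (\<forall>r \<phi> p. r > 0 \<and> c11_grad \<phi> x0 p \<and> p \<noteq> 0 \<and> continuous_on (cball x0 r) \<phi> \<and> \<phi> x0 = u x0 \<and>
       (\<forall>x\<in>ball x0 r - {x0}. \<phi> x > u x) \<longrightarrow>
       inf_frac_lap s (\<lambda>x. if x \<in> ball x0 r then \<phi> x else u x) x0 \<ge> 0)"

lemma viscosity_subsolution_at_nonzero_grad:
  "viscosity_subsolution_at s u x0 \<Longrightarrow> nonzero_grad_subsolution_at s u x0"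
  unfolding viscosity_subsolution_at_def nonzero_grad_subsolution_at_def C11_at_def by blast

lemma viscosity_supersolution_at_nonzero_grad_uminus:
  fixes u :: "'a::euclidean_space \<Rightarrow> real"
  assumes "viscosity_supersolution_at s u x0"
  shows "nonzero_grad_subsolution_at s (\<lambda>x. - u x) x0"
  unfolding nonzero_grad_subsolution_at_def
proof (intro allI impI, elim conjE)
  fix r \<phi> p
  assume r: "r > 0" and c11: "c11_grad \<phi> x0 p" and p: "p \<noteq> 0" and cont: "continuous_on (cball x0 r) \<phi>"
    and touch: "\<phi> x0 = - u x0" and above: "\<forall>x\<in>ball x0 r - {x0}. \<phi> x > - u x"
  define \<psi> where "\<psi> x = (if x \<in> ball x0 r then - \<phi> x else u x)" for x
  have neg_c11: "c11_grad (\<lambda>z. - \<phi> z) x0 (- p)"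
    using c11_grad_cmult[OF c11, of "-1"] by simp
  then have c11_\<psi>: "c11_grad \<psi> x0 (- p)"
    unfolding \<psi>_def by (rule c11_grad_if_ball[OF _ r])
  have "C11_at (\<lambda>z. - \<phi> z) x0"
    using neg_c11 unfolding C11_at_def ..
  moreover have "continuous_on (cball x0 r) (\<lambda>z. - \<phi> z)"
    using cont by (intro continuous_intros)
  ultimately have "inf_frac_lap s \<psi> x0 \<le> 0"
    using assms r touch above unfolding viscosity_supersolution_at_def \<psi>_def by force
  moreover have "(\<lambda>x. if x \<in> ball x0 r then \<phi> x else - u x) = (\<lambda>x. - \<psi> x)"
    unfolding \<psi>_def by auto
  ultimately show "inf_frac_lap s (\<lambda>x. if x \<in> ball x0 r then \<phi> x else - u x) x0 \<ge> 0"
    using inf_frac_lap_uminus[OF c11_\<psi>] p by simp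
qed

lemma set_integral_Ioi_negative:
  fixes D :: "real \<Rightarrow> real"
  assumes s: "1/2 < s" "s < 1" and r: "0 < r" and c: "0 < c"
    and eps: "eps * r\<^sup>2 * s < c * (1 - s)"
    and near: "\<And>\<eta>. 0 < \<eta> \<Longrightarrow> \<eta> < r \<Longrightarrow> D \<eta> = 2 * eps * \<eta> powr (1 - 2 * s)"
    and cont: "continuous_on {r<..} D"
    and far_lower: "\<And>\<eta>. r < \<eta> \<Longrightarrow> - (M * \<eta> powr (- 2)) - 2 * c * \<eta> powr (- (1 + 2 * s)) \<le> D \<eta>"
    and far_upper: "\<And>\<eta>. r < \<eta> \<Longrightarrow> D \<eta> \<le> - 2 * c * \<eta> powr (- (1 + 2 * s))"
  shows "set_integrable lborel {0<..} D" "(LINT \<eta>:{0<..}|lborel. D \<eta>) < 0"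
proof -
  note near_powr = set_integral_powr_Ioo[of "1 - 2 * s" r]
  note far_powr = set_integral_powr_Ioi[of "1 + 2 * s" r] set_integral_powr_Ioi[of 2 r]
  have int_near: "set_integrable lborel {0<..<r} D"
    and val_near: "(LINT \<eta>:{0<..<r}|lborel. D \<eta>) = eps * r powr (2 - 2 * s) / (1 - s)"
  proof -
    have "set_integrable lborel {0<..<r} (\<lambda>\<eta>. 2 * eps * \<eta> powr (1 - 2 * s))"
      using near_powr s r by simp
    then show "set_integrable lborel {0<..<r} D"
      using set_integrable_cong[of lborel lborel "{0<..<r}" "{0<..<r}" D] near by simp
    have "(LINT \<eta>:{0<..<r}|lborel. D \<eta>) = (LINT \<eta>:{0<..<r}|lborel. 2 * eps * \<eta> powr (1 - 2 * s))"
      using near by (intro set_lebesgue_integral_cong) auto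
    also have "\<dots> = 2 * eps * (r powr (2 - 2 * s) / (2 * (1 - s)))"
      using near_powr s r by (simp add: algebra_simps)
    finally show "(LINT \<eta>:{0<..<r}|lborel. D \<eta>) = eps * r powr (2 - 2 * s) / (1 - s)"
      using s by (simp add: field_simps)
  qed
  have int_far: "set_integrable lborel {r<..} D"
  proof (rule set_integrable_continuous_bound[OF _ cont])
    show "set_integrable lborel {r<..} (\<lambda>\<eta>. M * \<eta> powr (- 2) + 2 * c * \<eta> powr (- (1 + 2 * s)))"
      using far_powr s r by (intro set_integral_add set_integrable_mult_right) auto
    show "\<bar>D \<eta>\<bar> \<le> M * \<eta> powr (- 2) + 2 * c * \<eta> powr (- (1 + 2 * s))" if "\<eta> \<in> {r<..}" for \<eta>
    proof -
      have \<eta>: "r < \<eta>" using that by simp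
      have "0 \<le> c * \<eta> powr (- (1 + 2 * s))" using c by simp
      then show ?thesis
        using far_lower[OF \<eta>] far_upper[OF \<eta>] unfolding abs_le_iff by (intro conjI) linarith+
    qed
  qed simp
  have "set_integrable lborel {r<..} (\<lambda>\<eta>. - 2 * c * \<eta> powr (- (1 + 2 * s)))"
    using s r by (intro set_integrable_mult_right set_integral_powr_Ioi) auto
  then have "(LINT \<eta>:{r<..}|lborel. D \<eta>) \<le> (LINT \<eta>:{r<..}|lborel. - 2 * c * \<eta> powr (- (1 + 2 * s)))"
    using int_far far_upper by (intro set_integral_mono) auto
  also have "\<dots> = - c * r powr (- (2 * s)) / s"
    unfolding set_integral_mult_right using far_powr s r by simp
  finally have val_far: "(LINT \<eta>:{r<..}|lborel. D \<eta>) \<le> - c * r powr (- (2 * s)) / s" .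
  \<comment> \<open>The hypothesis on \<open>eps\<close> says exactly that the near part is smaller than the far bound.\<close>
  have "eps * r powr (2 - 2 * s) / (1 - s) = (eps * r\<^sup>2 * s) * (r powr (- (2 * s)) / (s * (1 - s)))"
    using r s by (simp add: powr_diff powr_minus_divide field_simps power2_eq_square powr_numeral)
  also have "\<dots> < (c * (1 - s)) * (r powr (- (2 * s)) / (s * (1 - s)))"
    using eps r s by (intro mult_strict_right_mono) auto
  also have "\<dots> = c * r powr (- (2 * s)) / s"
    using s by (simp add: field_simps)
  finally have "eps * r powr (2 - 2 * s) / (1 - s) < c * r powr (- (2 * s)) / s" .
  then show "set_integrable lborel {0<..} D" "(LINT \<eta>:{0<..}|lborel. D \<eta>) < 0"
    using set_integral_Ioi_split[OF r int_near int_far] val_near val_far by auto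
qed

lemma second_difference_quotient_cone_split:
  assumes "0 < R" "0 < \<eta>"
  shows "second_difference_quotient s w \<eta> = L * cone_second_difference s R \<eta>
     + second_difference_quotient s (\<lambda>t. w t - b - L * \<bar>R + t\<bar> powr (2 * s - 1)) \<eta>"
  using assms unfolding second_difference_quotient_def cone_second_difference_def
  by (simp add: field_simps)

lemma second_difference_quotient_near:
  assumes "\<And>t. \<bar>t\<bar> < r \<Longrightarrow> g t = eps * t\<^sup>2" "0 < \<eta>" "\<eta> < r"
  shows "second_difference_quotient s g \<eta> = 2 * eps * \<eta> powr (1 - 2 * s)"
proof -
  have "g \<eta> + g (- \<eta>) - 2 * g 0 = 2 * eps * \<eta>\<^sup>2"
    using assms by simp
  moreover have "\<eta>\<^sup>2 = \<eta> powr (1 - 2 * s) * \<eta> powr (1 + 2 * s)"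
  proof -
    have "\<eta> powr (1 - 2 * s) * \<eta> powr (1 + 2 * s) = \<eta> powr 2"
      by (simp add: powr_add[symmetric])
    then show ?thesis using assms(2) by simp
  qed
  ultimately show ?thesis
    unfolding second_difference_quotient_def using assms(2) by simp
qed

lemma second_difference_quotient_far:
  assumes s: "1/2 < s" and R: "0 < R" "R \<le> r" "r < \<eta>" and L: "0 \<le> L" and g0: "g 0 = 0"
    and lower: "\<And>t. r < \<bar>t\<bar> \<Longrightarrow> - c - 2 * L * \<bar>R + t\<bar> powr (2 * s - 1) \<le> g t"
    and upper: "\<And>t. r < \<bar>t\<bar> \<Longrightarrow> g t \<le> - c"
  shows "- (4 * L * 2 powr (2 * s - 1) * \<eta> powr (- 2)) - 2 * c * \<eta> powr (- (1 + 2 * s))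
      \<le> second_difference_quotient s g \<eta>"
    "second_difference_quotient s g \<eta> \<le> - 2 * c * \<eta> powr (- (1 + 2 * s))"
proof -
  have \<eta>: "0 < \<eta>" "r < \<bar>\<eta>\<bar>" "r < \<bar>- \<eta>\<bar>" using R by auto
  have "\<bar>R + \<eta>\<bar> powr (2 * s - 1) \<le> (2 * \<eta>) powr (2 * s - 1)" "\<bar>R + - \<eta>\<bar> powr (2 * s - 1) \<le> (2 * \<eta>) powr (2 * s - 1)"
    using R s by (intro powr_mono2; simp)+
  then have "2 * L * \<bar>R + \<eta>\<bar> powr (2 * s - 1) \<le> 2 * L * (2 * \<eta>) powr (2 * s - 1)"
    "2 * L * \<bar>R + - \<eta>\<bar> powr (2 * s - 1) \<le> 2 * L * (2 * \<eta>) powr (2 * s - 1)"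
    using L by (simp_all add: mult_left_mono)
  then have N: "- (4 * L * (2 * \<eta>) powr (2 * s - 1)) - 2 * c \<le> g \<eta> + g (- \<eta>) - 2 * g 0"
    "g \<eta> + g (- \<eta>) - 2 * g 0 \<le> - 2 * c"
    using lower[OF \<eta>(2)] lower[OF \<eta>(3)] upper[OF \<eta>(2)] upper[OF \<eta>(3)] g0 by linarith+
  have quotient: "second_difference_quotient s g \<eta> = (g \<eta> + g (- \<eta>) - 2 * g 0) * \<eta> powr (- (1 + 2 * s))"
    unfolding second_difference_quotient_def powr_minus_divide by simp
  have "(2 * \<eta>) powr (2 * s - 1) * \<eta> powr (- (1 + 2 * s)) = 2 powr (2 * s - 1) * \<eta> powr (- 2)"
    using \<eta>(1) by (simp add: powr_mult mult.assoc powr_add[symmetric])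
  then have "(- (4 * L * (2 * \<eta>) powr (2 * s - 1)) - 2 * c) * \<eta> powr (- (1 + 2 * s))
      = - (4 * L * 2 powr (2 * s - 1) * \<eta> powr (- 2)) - 2 * c * \<eta> powr (- (1 + 2 * s))"
    by (simp add: algebra_simps)
  then show "- (4 * L * 2 powr (2 * s - 1) * \<eta> powr (- 2)) - 2 * c * \<eta> powr (- (1 + 2 * s))
      \<le> second_difference_quotient s g \<eta>"
    unfolding quotient using mult_right_mono[OF N(1), of "\<eta> powr (- (1 + 2 * s))"] by simp
  show "second_difference_quotient s g \<eta> \<le> - 2 * c * \<eta> powr (- (1 + 2 * s))"
    unfolding quotient using mult_right_mono[OF N(2), of "\<eta> powr (- (1 + 2 * s))"] by simp
qed

lemma second_difference_integral_negative:
  fixes w :: "real \<Rightarrow> real"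
  assumes s: "1/2 < s" "s < 1" and R: "0 < R" "R \<le> r" and L: "0 \<le> L" and c: "0 < c"
    and eps: "eps * r\<^sup>2 * s < c * (1 - s)"
    and near: "\<And>t. \<bar>t\<bar> < r \<Longrightarrow> w t = b + L * \<bar>R + t\<bar> powr (2 * s - 1) + eps * t\<^sup>2"
    and far: "\<And>t. r < \<bar>t\<bar> \<Longrightarrow> \<bar>w t - (b - c)\<bar> \<le> L * \<bar>R + t\<bar> powr (2 * s - 1)"
    and cont: "continuous_on {t. r < \<bar>t\<bar>} w"
  shows "(LINT \<eta>:{0<..}|lborel. second_difference_quotient s w \<eta>) < 0"
proof -
  define g where "g t = w t - b - L * \<bar>R + t\<bar> powr (2 * s - 1)" for t
  have r: "0 < r" using R by simp
  have g_near: "g t = eps * t\<^sup>2" if "\<bar>t\<bar> < r" for t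
    using near[OF that] unfolding g_def by simp
  have g_far: "- c - 2 * L * \<bar>R + t\<bar> powr (2 * s - 1) \<le> g t" "g t \<le> - c" if "r < \<bar>t\<bar>" for t
    using far[OF that] unfolding g_def by (simp_all add: abs_le_iff)
  have "continuous_on {t. r < \<bar>t\<bar>} g"
    unfolding g_def using s R by (intro continuous_intros cont continuous_on_powr') auto
  then have "continuous_on {r<..} (\<lambda>\<eta>. g \<eta>)" "continuous_on {r<..} (\<lambda>\<eta>. g (- \<eta>))"
    using r by (auto intro!: continuous_on_compose2[of "{t. r < \<bar>t\<bar>}" g] continuous_intros)
  then have cont_quotient: "continuous_on {r<..} (second_difference_quotient s g)"
    unfolding second_difference_quotient_def using r by (auto intro!: continuous_intros)
  have g0: "g 0 = 0"
    using g_near[of 0] r by simp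
  note quotient_far = second_difference_quotient_far[OF s(1) R _ L g0 g_far]
  note integral_g = set_integral_Ioi_negative[OF s r c eps
      second_difference_quotient_near[of r g eps, OF g_near] cont_quotient quotient_far]
  note integral_cone = cone_second_difference_integral[OF s R(1)]
  have "(LINT \<eta>:{0<..}|lborel. second_difference_quotient s w \<eta>)
      = (LINT \<eta>:{0<..}|lborel. L * cone_second_difference s R \<eta> + second_difference_quotient s g \<eta>)"
    unfolding g_def using R by (intro set_lebesgue_integral_cong) (auto simp: second_difference_quotient_cone_split)
  also have "\<dots> = L * (LINT \<eta>:{0<..}|lborel. cone_second_difference s R \<eta>)
      + (LINT \<eta>:{0<..}|lborel. second_difference_quotient s g \<eta>)"
    using integral_cone(1) integral_g(1) by simp
  also have "\<dots> < 0"
    using integral_cone(2) integral_g(2) by simp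
  finally show ?thesis .
qed

lemma c11_grad_cone_test:
  fixes x0 y :: "'a::euclidean_space"
  assumes "x0 \<noteq> y"
  shows "c11_grad (\<lambda>z. A + L * norm (z - y) powr a + eps * (norm (z - x0))\<^sup>2) x0
           ((L * a * norm (x0 - y) powr (a - 2)) *\<^sub>R (x0 - y))"
proof -
  have "c11_grad (\<lambda>z. A + L * norm (z - y) powr a + eps * (norm (z - x0))\<^sup>2) x0
      (0 + L *\<^sub>R ((a * norm (x0 - y) powr (a - 2)) *\<^sub>R (x0 - y)) + eps *\<^sub>R (2 *\<^sub>R (x0 - x0)))"
    by (intro c11_grad_add c11_grad_const c11_grad_cmult c11_grad_norm_diff_powr c11_grad_norm_diff_square assms)
  also have "0 + L *\<^sub>R ((a * norm (x0 - y) powr (a - 2)) *\<^sub>R (x0 - y)) + eps *\<^sub>R (2 *\<^sub>R (x0 - x0))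
      = (L * a * norm (x0 - y) powr (a - 2)) *\<^sub>R (x0 - y)"
    by (simp add: mult.assoc)
  finally show ?thesis .
qed

lemma norm_along_ray:
  fixes x0 y :: "'a::real_normed_vector"
  assumes "x0 \<noteq> y"
  shows "norm (x0 + t *\<^sub>R ((x0 - y) /\<^sub>R norm (x0 - y)) - y) = \<bar>norm (x0 - y) + t\<bar>"
proof -
  define v where "v = (x0 - y) /\<^sub>R norm (x0 - y)"
  have "x0 - y = norm (x0 - y) *\<^sub>R v"
    using assms by (simp add: v_def)
  then have "x0 + t *\<^sub>R v - y = (norm (x0 - y) + t) *\<^sub>R v"
    by (metis add_diff_eq diff_add_eq scaleR_add_left)
  moreover have "norm v = 1"
    using assms by (simp add: v_def)
  ultimately show ?thesis
    unfolding v_def[symmetric] by simp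
qed

lemma exists_positive_max:
  fixes g :: "'a::heine_borel \<Rightarrow> real"
  assumes "bounded \<Omega>" "continuous_on UNIV g" "\<And>z. z \<notin> \<Omega> \<Longrightarrow> g z \<le> 0" "0 < g x"
  obtains x0 where "x0 \<in> \<Omega>" "0 < g x0" "\<And>z. g z \<le> g x0"
proof -
  have in_\<Omega>: "z \<in> \<Omega>" if "0 < g z" for z
  proof (rule ccontr)
    assume "z \<notin> \<Omega>"
    with assms(3) have "g z \<le> 0" .
    with that show False by simp
  qed
  then have x: "x \<in> closure \<Omega>"
    using assms(4) closure_subset by blast
  have "compact (closure \<Omega>)"
    using assms(1) by simp
  moreover have "closure \<Omega> \<noteq> {}"
    using x by auto
  moreover have "continuous_on (closure \<Omega>) g"
    using assms(2) by (rule continuous_on_subset) simp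
  ultimately have "\<exists>x0\<in>closure \<Omega>. \<forall>z\<in>closure \<Omega>. g z \<le> g x0"
    by (rule continuous_attains_sup)
  then obtain x0 where x0: "x0 \<in> closure \<Omega>" "\<forall>z\<in>closure \<Omega>. g z \<le> g x0" ..
  have pos: "0 < g x0"
    using x0(2) x assms(4) by fastforce
  have "g z \<le> g x0" for z
  proof (cases "z \<in> \<Omega>")
    case True
    then show ?thesis using x0(2) closure_subset by blast
  next
    case False
    then have "g z \<le> 0" by (rule assms(3))
    with pos show ?thesis by simp
  qed
  with in_\<Omega>[OF pos] pos show thesis
    by (rule that)
qed

lemma normalize_scaleR_pos:
  fixes w :: "'a::real_normed_vector"
  assumes "0 < k"
  shows "(k *\<^sub>R w) /\<^sub>R norm (k *\<^sub>R w) = w /\<^sub>R norm w"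
  using assms by (simp add: scaleR_scaleR)

lemma inf_frac_lap_cone_test:
  fixes u :: "'a::euclidean_space \<Rightarrow> real" and A eps :: real
  assumes s: "1/2 < s" and L: "0 < L" and xy: "x0 \<noteq> y" and r: "0 < r"
  defines "\<psi> \<equiv> \<lambda>z. if z \<in> ball x0 r then A + L * norm (z - y) powr (2 * s - 1) + eps * (norm (z - x0))\<^sup>2 else u z"
  shows "inf_frac_lap s \<psi> x0 = directional_frac_lap s \<psi> x0 ((x0 - y) /\<^sub>R norm (x0 - y))"
proof -
  define k where "k = L * (2 * s - 1) * norm (x0 - y) powr (2 * s - 1 - 2)"
  have k: "0 < k" using L s xy unfolding k_def by simp
  have "c11_grad \<psi> x0 (k *\<^sub>R (x0 - y))"
    unfolding \<psi>_def k_def using c11_grad_cone_test[OF xy] r by (rule c11_grad_if_ball)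
  moreover have "k *\<^sub>R (x0 - y) \<noteq> 0"
    using k xy by simp
  ultimately have "inf_frac_lap s \<psi> x0 = directional_frac_lap s \<psi> x0 (k *\<^sub>R (x0 - y) /\<^sub>R norm (k *\<^sub>R (x0 - y)))"
    by (rule inf_frac_lap_nonzero_grad)
  then show ?thesis
    unfolding normalize_scaleR_pos[OF k] .
qed

lemma frac_lap_cone_test_negative:
  fixes u :: "'a::euclidean_space \<Rightarrow> real"
  assumes s: "1/2 < s" "s < 1" and L: "0 < L" and c: "0 < c"
    and xy: "x0 \<noteq> y" and r: "norm (x0 - y) \<le> r" and \<Omega>: "\<Omega> \<subseteq> ball x0 r"
    and eps: "eps * r\<^sup>2 * s < c * (1 - s)"
    and outside: "\<And>z. z \<notin> \<Omega> \<Longrightarrow> \<bar>u z - a\<bar> \<le> L * norm (z - y) powr (2 * s - 1)"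
    and cont: "continuous_on UNIV u"
  defines "\<psi> \<equiv> \<lambda>z. if z \<in> ball x0 r then a + c + L * norm (z - y) powr (2 * s - 1) + eps * (norm (z - x0))\<^sup>2 else u z"
  shows "inf_frac_lap s \<psi> x0 < 0"
proof -
  define R where "R = norm (x0 - y)"
  define v where "v = (x0 - y) /\<^sub>R R"
  define w where "w t = \<psi> (x0 + t *\<^sub>R v)" for t
  have R: "0 < R" "R \<le> r" using xy r unfolding R_def by auto
  have ray: "norm (x0 + t *\<^sub>R v - y) = \<bar>R + t\<bar>" for t
    unfolding v_def R_def by (rule norm_along_ray[OF xy])
  have nv: "norm v = 1"
    using xy unfolding v_def R_def by simp
  then have dist_ray: "dist x0 (x0 + t *\<^sub>R v) = \<bar>t\<bar>" for t
    by (simp add: dist_norm)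
  have "inf_frac_lap s \<psi> x0 = directional_frac_lap s \<psi> x0 v"
    unfolding \<psi>_def v_def R_def using s L xy R by (intro inf_frac_lap_cone_test) auto
  also have "\<dots> = (LINT \<eta>:{0<..}|lborel. second_difference_quotient s w \<eta>)"
    unfolding directional_frac_lap_def w_def ..
  also have "\<dots> < 0"
  proof (rule second_difference_integral_negative[OF s R _ c eps, where b = "a + c"])
    show "w t = a + c + L * \<bar>R + t\<bar> powr (2 * s - 1) + eps * t\<^sup>2" if "\<bar>t\<bar> < r" for t
      using that dist_ray[of t] ray[of t] nv unfolding w_def \<psi>_def by simp
    show "\<bar>w t - (a + c - c)\<bar> \<le> L * \<bar>R + t\<bar> powr (2 * s - 1)" if "r < \<bar>t\<bar>" for t
    proof -
      have "x0 + t *\<^sub>R v \<notin> ball x0 r"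
        using that dist_ray[of t] by simp
      moreover from this have "x0 + t *\<^sub>R v \<notin> \<Omega>"
        using \<Omega> by blast
      ultimately show ?thesis
        using outside[of "x0 + t *\<^sub>R v"] ray[of t] unfolding w_def \<psi>_def by simp
    qed
    have "continuous_on {t. r < \<bar>t\<bar>} (\<lambda>t. u (x0 + t *\<^sub>R v))"
      by (intro continuous_on_compose2[OF cont] continuous_intros) auto
    moreover have "u (x0 + t *\<^sub>R v) = w t" if "t \<in> {t. r < \<bar>t\<bar>}" for t
      using that dist_ray[of t] unfolding w_def \<psi>_def by simp
    ultimately show "continuous_on {t. r < \<bar>t\<bar>} w"
      by (rule continuous_on_eq)
  qed (use L in simp)
  finally show ?thesis .
qed

lemma bounded_subset_ball_radius_ge:
  fixes \<Omega> :: "'a::real_normed_vector set"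
  assumes "bounded \<Omega>" "0 \<le> d"
  obtains r where "0 < r" "d \<le> r" "\<Omega> \<subseteq> ball x r"
proof -
  obtain B where B: "0 < B" "\<Omega> \<subseteq> ball x B"
    using bounded_subset_ballD[OF assms(1)] by blast
  have "ball x B \<subseteq> ball x (B + d)"
    using assms(2) by (intro subset_ball) simp
  with B assms(2) show thesis
    by (intro that[of "B + d"]) auto
qed

lemma cone_comparison_above:
  fixes u :: "'a::euclidean_space \<Rightarrow> real"
  assumes s: "1/2 < s" "s < 1" and bdd: "bounded \<Omega>" and cont: "continuous_on UNIV u" and L: "0 < L"
    and sub: "\<And>x0. x0 \<in> \<Omega> \<Longrightarrow> nonzero_grad_subsolution_at s u x0"
    and outside: "\<And>z. z \<notin> \<Omega> \<Longrightarrow> \<bar>u z - a\<bar> \<le> L * norm (z - y) powr (2 * s - 1)"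
    and center: "y \<in> \<Omega> \<Longrightarrow> u y = a"
  shows "u x \<le> a + L * norm (x - y) powr (2 * s - 1)"
proof (rule ccontr)
  assume contra: "\<not> ?thesis"
  define g where "g z = u z - a - L * norm (z - y) powr (2 * s - 1)" for z
  have "continuous_on UNIV g"
    unfolding g_def using s by (intro continuous_intros cont continuous_on_powr') auto
  moreover have "g z \<le> 0" if "z \<notin> \<Omega>" for z
    using outside[OF that] unfolding g_def by (simp add: abs_le_iff)
  moreover have "0 < g x"
    using contra unfolding g_def by simp
  ultimately obtain x0 where x0: "x0 \<in> \<Omega>" "0 < g x0" "\<And>z. g z \<le> g x0"
    using exists_positive_max[OF bdd] by blast
  define c where "c = g x0"
  have c: "0 < c" using x0(2) unfolding c_def .
  have xy: "x0 \<noteq> y"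
    using x0(1,2) center unfolding g_def by auto
  obtain r where r: "0 < r" "norm (x0 - y) \<le> r" and \<Omega>: "\<Omega> \<subseteq> ball x0 r"
    using bounded_subset_ball_radius_ge[OF bdd norm_ge_zero] .
  define eps where "eps = c * (1 - s) / (2 * s * r\<^sup>2)"
  have eps: "0 < eps" "eps * r\<^sup>2 * s < c * (1 - s)"
    using c s r unfolding eps_def by (simp_all add: field_simps)
  define \<phi> where "\<phi> z = a + c + L * norm (z - y) powr (2 * s - 1) + eps * (norm (z - x0))\<^sup>2" for z
  define p where "p = (L * (2 * s - 1) * norm (x0 - y) powr (2 * s - 1 - 2)) *\<^sub>R (x0 - y)"
  have "0 \<le> inf_frac_lap s (\<lambda>z. if z \<in> ball x0 r then \<phi> z else u z) x0"
  proof (rule sub[OF x0(1), unfolded nonzero_grad_subsolution_at_def, rule_format], intro conjI)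
    show "c11_grad \<phi> x0 p"
      unfolding \<phi>_def p_def by (rule c11_grad_cone_test[OF xy])
    show "p \<noteq> 0"
      using L s xy unfolding p_def by simp
    show "continuous_on (cball x0 r) \<phi>"
      unfolding \<phi>_def using s by (intro continuous_intros continuous_on_powr') auto
    show "\<phi> x0 = u x0"
      unfolding \<phi>_def c_def g_def by simp
    show "\<forall>z\<in>ball x0 r - {x0}. u z < \<phi> z"
    proof
      fix z assume "z \<in> ball x0 r - {x0}"
      then have "0 < eps * (norm (z - x0))\<^sup>2" using eps by simp
      then show "u z < \<phi> z"
        using x0(3)[of z] unfolding \<phi>_def c_def g_def by simp
    qed
  qed (use r in simp)
  moreover have "inf_frac_lap s (\<lambda>z. if z \<in> ball x0 r then \<phi> z else u z) x0 < 0"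
    unfolding \<phi>_def using frac_lap_cone_test_negative[OF s L c xy r(2) \<Omega> eps(2) outside cont] .
  ultimately show False by simp
qed

lemma cone_comparison:
  fixes u :: "'a::euclidean_space \<Rightarrow> real"
  assumes s: "1/2 < s" "s < 1" and bdd: "bounded \<Omega>" and sol: "viscosity_solution s u \<Omega>"
    and cont: "continuous_on UNIV u" and L: "0 \<le> L"
    and outside: "\<And>z. z \<notin> \<Omega> \<Longrightarrow> \<bar>u z - a\<bar> \<le> L * norm (z - y) powr (2 * s - 1)"
    and center: "y \<in> \<Omega> \<Longrightarrow> u y = a"
  shows "\<bar>u x - a\<bar> \<le> L * norm (x - y) powr (2 * s - 1)"
proof -
  define d where "d = norm (x - y) powr (2 * s - 1)"
  \<comment> \<open>Slopes \<open>L' > L\<close> keep the gradient of the test function nonzero, also when \<open>L = 0\<close>.\<close>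
  have bound: "\<bar>u x - a\<bar> \<le> L' * d" if "L < L'" for L'
  proof -
    have L': "0 < L'" using L that by simp
    have outside': "\<bar>u z - a\<bar> \<le> L' * norm (z - y) powr (2 * s - 1)" if "z \<notin> \<Omega>" for z
      using outside[OF that] mult_right_mono[of L L' "norm (z - y) powr (2 * s - 1)"] \<open>L < L'\<close> by simp
    have "u x \<le> a + L' * d"
      unfolding d_def using sol
      by (intro cone_comparison_above[OF s bdd cont L' _ outside' center])
        (simp add: viscosity_solution_def viscosity_subsolution_at_nonzero_grad)
    moreover have "- u x \<le> - a + L' * d"
      unfolding d_def using sol outside' center
      by (intro cone_comparison_above[OF s bdd _ L', where u = "\<lambda>z. - u z"])
        (auto simp: viscosity_solution_def viscosity_supersolution_at_nonzero_grad_uminus abs_minus_commute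
          intro: continuous_intros cont)
    ultimately show ?thesis by (simp add: abs_le_iff)
  qed
  show ?thesis
  proof (rule field_le_epsilon)
    fix e :: real assume e: "0 < e"
    have d: "0 \<le> d" unfolding d_def by simp
    have "\<bar>u x - a\<bar> \<le> (L + e / (d + 1)) * d"
      using bound e d by simp
    also have "\<dots> \<le> L * d + e"
      using e d by (simp add: distrib_right divide_le_eq)
    finally show "\<bar>u x - a\<bar> \<le> L * norm (x - y) powr (2 * s - 1) + e"
      unfolding d_def .
  qed
qed

lemma viscosity_solution_holder_estimate:
  fixes u :: "'a::euclidean_space \<Rightarrow> real"
  assumes s: "1/2 < s" "s < 1" and bdd: "bounded \<Omega>" and sol: "viscosity_solution s u \<Omega>"
    and cont: "continuous_on UNIV u" and L: "0 \<le> L"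
    and exterior: "\<And>x y. x \<notin> \<Omega> \<Longrightarrow> y \<notin> \<Omega> \<Longrightarrow> \<bar>u x - u y\<bar> \<le> L * dist x y powr (2 * s - 1)"
  shows "\<bar>u x - u y\<bar> \<le> L * dist x y powr (2 * s - 1)"
proof -
  note comparison = cone_comparison[OF s bdd sol cont L]
  have to_exterior: "\<bar>u x - u y\<bar> \<le> L * dist x y powr (2 * s - 1)" if "y \<notin> \<Omega>" for x y
    using that exterior by (auto simp: dist_norm intro: comparison)
  show ?thesis
  proof (cases "y \<in> \<Omega>")
    case True
    have "\<bar>u z - u y\<bar> \<le> L * norm (z - y) powr (2 * s - 1)" if "z \<notin> \<Omega>" for z
      using to_exterior[OF that, of y] by (simp add: abs_minus_commute dist_norm norm_minus_commute)
    then show ?thesis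
      unfolding dist_norm by (rule comparison) auto
  qed (rule to_exterior)
qed

lemma usc_lsc_imp_continuous:
  fixes u :: "'a::metric_space \<Rightarrow> real"
  assumes "usc u" "lsc u"
  shows "continuous_on UNIV u"
proof (rule continuous_at_imp_continuous_on, intro ballI)
  fix x :: 'a
  show "isCont u x"
    unfolding isCont_def tendsto_iff
  proof (intro allI impI)
    fix e :: real assume "0 < e"
    then have "\<forall>\<^sub>F y in at x. u y < u x + e" "\<forall>\<^sub>F y in at x. u x - e < u y"
      using assms unfolding usc_def lsc_def by blast+
    then show "\<forall>\<^sub>F y in at x. dist (u y) (u x) < e"
      by eventually_elim (simp add: dist_real_def abs_less_iff)
  qed
qed

lemma holder_seminorm_le_ereal:
  fixes f :: "'a::metric_space \<Rightarrow> real"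
  assumes "\<And>x y. x \<in> A \<Longrightarrow> y \<in> A \<Longrightarrow> \<bar>f x - f y\<bar> \<le> L * dist x y powr \<gamma>"
  shows "holder_seminorm f A \<gamma> \<le> ereal L"
  unfolding holder_seminorm_def
proof (rule SUP_least, clarify)
  fix x y assume "x \<in> A" "y \<in> A" "x \<noteq> y"
  then show "ereal (\<bar>f (fst (x, y)) - f (snd (x, y))\<bar> / dist (fst (x, y)) (snd (x, y)) powr \<gamma>) \<le> ereal L"
    using assms[of x y] by (simp add: divide_le_eq)
qed

lemma holder_seminorm_bound:
  fixes f :: "'a::metric_space \<Rightarrow> real"
  assumes "holder_seminorm f A \<gamma> \<le> ereal L" "x \<in> A" "y \<in> A"
  shows "\<bar>f x - f y\<bar> \<le> L * dist x y powr \<gamma>"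
proof (cases "x = y")
  case False
  have "ereal (\<bar>f x - f y\<bar> / dist x y powr \<gamma>) \<le> holder_seminorm f A \<gamma>"
    unfolding holder_seminorm_def by (rule SUP_upper2[of "(x, y)"]) (use assms False in auto)
  then have "ereal (\<bar>f x - f y\<bar> / dist x y powr \<gamma>) \<le> ereal L"
    using assms(1) by (rule order_trans)
  then have "\<bar>f x - f y\<bar> / dist x y powr \<gamma> \<le> L"
    by simp
  then show ?thesis
    using False by (simp add: divide_le_eq)
qed simp

lemma holder_seminorm_nonneg:
  fixes f :: "'a::metric_space \<Rightarrow> real"
  assumes "x \<in> A" "y \<in> A" "x \<noteq> y"
  shows "0 \<le> holder_seminorm f A \<gamma>"
  unfolding holder_seminorm_def by (rule SUP_upper2[of "(x, y)"]) (use assms in auto)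

lemma infinite_compl_bounded:
  fixes \<Omega> :: "'a::euclidean_space set"
  assumes "bounded \<Omega>"
  shows "infinite (- \<Omega>)"
  using assms not_bounded_UNIV finite_imp_bounded bounded_Un by (metis Compl_partition)

lemma holder_seminorm_compl_bounded_eq_ereal:
  fixes f :: "'a::euclidean_space \<Rightarrow> real"
  assumes "bounded \<Omega>" "holder f (- \<Omega>) \<gamma>"
  obtains L where "holder_seminorm f (- \<Omega>) \<gamma> = ereal L" "0 \<le> L"
proof -
  have inf: "infinite (- \<Omega>)"
    using infinite_compl_bounded[OF assms(1)] .
  then obtain z1 where z1: "z1 \<in> - \<Omega>"
    using infinite_imp_nonempty by blast
  have "infinite (- \<Omega> - {z1})"
    using inf by simp
  then obtain z2 where z2: "z2 \<in> - \<Omega> - {z1}"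
    using infinite_imp_nonempty by blast
  have "0 \<le> holder_seminorm f (- \<Omega>) \<gamma>"
    using z1 z2 by (intro holder_seminorm_nonneg[of z1 _ z2]) auto
  moreover have "holder_seminorm f (- \<Omega>) \<gamma> < \<infinity>"
    using assms(2) unfolding holder_def .
  ultimately show thesis
    using that by (cases "holder_seminorm f (- \<Omega>) \<gamma>") auto
qed

lemma viscosity_solution_continuous:
  fixes u :: "'a::euclidean_space \<Rightarrow> real"
  assumes "viscosity_solution s u \<Omega>" "\<Omega> \<noteq> {}"
  shows "continuous_on UNIV u"
  using assms usc_lsc_imp_continuous
  unfolding viscosity_solution_def viscosity_subsolution_at_def viscosity_supersolution_at_def by blast

theorem corollary3p8:
  fixes s :: real and \<Omega> :: "'a::euclidean_space set" and u f :: "'a \<Rightarrow> real"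
  assumes "1/2 < s" "s < 1"
    and "bounded \<Omega>" "open \<Omega>"
    and "viscosity_solution s u \<Omega>"
    and "\<forall>x. x \<notin> \<Omega> \<longrightarrow> u x = f x"
    and "holder f (- \<Omega>) (2 * s - 1)"
  shows "holder u UNIV (2 * s - 1) \<and>
         holder_seminorm u UNIV (2 * s - 1) \<le> holder_seminorm f (- \<Omega>) (2 * s - 1)"
proof (cases "\<Omega> = {}")
  case True
  then have "u = f" using assms(6) by auto
  then show ?thesis using assms(7) True by simp
next
  case False
  obtain L where L: "holder_seminorm f (- \<Omega>) (2 * s - 1) = ereal L" "0 \<le> L"
    using holder_seminorm_compl_bounded_eq_ereal[OF assms(3,7)] .
  have "\<bar>u x - u y\<bar> \<le> L * dist x y powr (2 * s - 1)" for x y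
  proof (rule viscosity_solution_holder_estimate[OF assms(1-3,5) viscosity_solution_continuous[OF assms(5) False] L(2)])
    fix x y assume "x \<notin> \<Omega>" "y \<notin> \<Omega>"
    then show "\<bar>u x - u y\<bar> \<le> L * dist x y powr (2 * s - 1)"
      using holder_seminorm_bound[of f "- \<Omega>" "2 * s - 1" L x y] L(1) assms(6) by simp
  qed
  then have le: "holder_seminorm u UNIV (2 * s - 1) \<le> holder_seminorm f (- \<Omega>) (2 * s - 1)"
    unfolding L(1) by (rule holder_seminorm_le_ereal)
  also have "\<dots> < \<infinity>"
    using assms(7) unfolding holder_def .
  finally show ?thesis
    unfolding holder_def using le by (intro conjI)
qed

end
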